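(* For all $A,r\in\mathbb{N}$ and $\varepsilon>0$ there are $\delta>0$ and $S>0$ such that the following holds. Let $n_1,\ldots,n_r$ be positive integers with $n_i\leq An_j$ for all $i,j$, and let $\Lambda=(\lambda_{i,j})$ be a symmetric non-negative $r\times r$ matrix that is $\varepsilon$-separated and connected. Let $D=\mathrm{diag}(n_1,\ldots,n_r)$, let $y_1,\ldots,y_r$ be an orthonormal basis of $\mathbb{R}^r$ of eigenvectors of $\Lambda$ with eigenvalues $\theta_1\geq\cdots\geq\theta_r$ (so $y_1$ is the Perron–Frobenius eigenvector, chosen with non-negative entries), and let $x_j=D^{-1/2}y_j$. Let $\vec z\in[0,\infty)^r$ and write $\vec z=\sum_j\alpha_jx_j$. Then: (1) $\|\alpha_1x_1\|_2\geq\delta\|\vec z\|_2$; (2) for all $j$, $\|\alpha_jx_j\|_2\leq S\|\vec z\|_2$.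
   Context: $\Lambda$ is $\varepsilon$-separated if for all $i,j$ either $\lambda_{i,j}=0$ or $\varepsilon\leq\lambda_{i,j}\leq 1/\varepsilon$; connected if the graph on $[r]$ with edges $\{i,j\}$ for $\lambda_{i,j}>0$ is connected. The vectors $x_j$ are eigenvectors of $M$, $M_{i,j}=\lambda_{i,j}n_j/\sqrt{n_in_j}$. *)

theory Defs
  imports Main "HOL-Analysis.Analysis"
begin

text \<open>Vectors in R^r are represented as functions nat => real, only the
entries with index < r (i.e. indices 0..r-1) being relevant.
An r x r matrix is a function nat => nat => real with indices < r.\<close>

definition l2norm :: "nat \<Rightarrow> (nat \<Rightarrow> real) \<Rightarrow> real" where
  "l2norm r v = sqrt (\<Sum>i<r. (v i)\<^sup>2)"

definition eps_separated :: "nat \<Rightarrow> real \<Rightarrow> (nat \<Rightarrow> nat \<Rightarrow> real) \<Rightarrow> bool" where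
  "eps_separated r \<epsilon> L \<longleftrightarrow>
     (\<forall>i<r. \<forall>j<r. L i j = 0 \<or> (\<epsilon> \<le> L i j \<and> L i j \<le> 1 / \<epsilon>))"

definition matrix_graph_connected :: "nat \<Rightarrow> (nat \<Rightarrow> nat \<Rightarrow> real) \<Rightarrow> bool" where
  "matrix_graph_connected r L \<longleftrightarrow>
     (\<forall>i<r. \<forall>j<r. (\<lambda>a b. a < r \<and> b < r \<and> L a b > 0)\<^sup>*\<^sup>* i j)"

end

theory Submission
  imports Defs
begin

text \<open>
  The Perron eigenvector \<open>y 0\<close> of an \<open>\<epsilon>\<close>-separated connected matrix has all entries
  bounded below by a constant depending only on \<open>r\<close> and \<open>\<epsilon>\<close>: its largest entry is at
  least \<open>1 / sqrt r\<close>, its eigenvalue is at most \<open>r / \<epsilon>\<close>, so along each edge of the graph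
  the entries shrink at most by the factor \<open>r / \<epsilon>\<^sup>2 + 1\<close>, and every vertex is reached by a
  path of length at most \<open>r\<^sup>2\<close>.

  Put \<open>w i = sqrt (n i) * z i = (\<Sum>j. \<alpha> j * y j i)\<close>. Orthonormality gives
  \<open>\<alpha> j = (\<Sum>i. w i * y j i)\<close>, hence \<open>\<bar>\<alpha> j\<bar> \<le> \<parallel>w\<parallel>\<close> by Cauchy-Schwarz, while for \<open>z \<ge> 0\<close>
  the lower bound \<open>c\<close> on \<open>y 0\<close> gives \<open>\<alpha> 0 \<ge> c * (\<Sum>i. w i) \<ge> c * \<parallel>w\<parallel>\<close>. As all \<open>n i\<close> lie
  within a factor \<open>A + 1\<close> of \<open>n 0\<close>, passing from \<open>z\<close> to \<open>w\<close> and from \<open>y j\<close> to \<open>x j\<close>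
  changes norms only by bounded factors.
\<close>

lemma l2norm_eq_L2_set: "l2norm r v = L2_set v {..<r}"
  by (simp add: l2norm_def L2_set_def)

lemma L2_set_div_sqrt_le:
  assumes "0 < m" and "\<And>i. i \<in> K \<Longrightarrow> m \<le> d i"
  shows "L2_set (\<lambda>i. v i / sqrt (d i)) K \<le> L2_set v K / sqrt m"
proof -
  have "(\<Sum>i\<in>K. (v i / sqrt (d i))\<^sup>2) \<le> (\<Sum>i\<in>K. (v i)\<^sup>2 / m)"
  proof (intro sum_mono)
    fix i assume "i \<in> K"
    with assms have "0 < d i" "m \<le> d i" by force+
    then show "(v i / sqrt (d i))\<^sup>2 \<le> (v i)\<^sup>2 / m"
      using \<open>0 < m\<close> by (simp add: power_divide divide_left_mono)
  qed
  from real_sqrt_le_mono[OF this] show ?thesis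
    by (simp add: L2_set_def real_sqrt_divide flip: sum_divide_distrib)
qed

lemma L2_set_div_sqrt_ge:
  assumes "\<And>i. i \<in> K \<Longrightarrow> 0 < d i \<and> d i \<le> M"
  shows "L2_set v K / sqrt M \<le> L2_set (\<lambda>i. v i / sqrt (d i)) K"
proof -
  have "(\<Sum>i\<in>K. (v i)\<^sup>2 / M) \<le> (\<Sum>i\<in>K. (v i / sqrt (d i))\<^sup>2)"
  proof (intro sum_mono)
    fix i assume "i \<in> K"
    with assms have "0 < d i" "d i \<le> M" by auto
    then show "(v i)\<^sup>2 / M \<le> (v i / sqrt (d i))\<^sup>2"
      by (simp add: power_divide divide_left_mono)
  qed
  from real_sqrt_le_mono[OF this] show ?thesis
    by (simp add: L2_set_def real_sqrt_divide flip: sum_divide_distrib)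
qed

lemma L2_set_mult_left: "L2_set (\<lambda>i. c * f i) K = \<bar>c\<bar> * L2_set f K"
  by (simp add: L2_set_def power_mult_distrib real_sqrt_mult flip: sum_distrib_left)

lemma orthonormal_expansion_coeff:
  fixes y :: "nat \<Rightarrow> nat \<Rightarrow> real"
  assumes orth: "\<forall>j<r. \<forall>k<r. (\<Sum>i<r. y j i * y k i) = (if j = k then 1 else 0)"
    and w: "\<And>i. i < r \<Longrightarrow> w i = (\<Sum>j<r. \<alpha> j * y j i)"
    and "k < r"
  shows "\<alpha> k = (\<Sum>i<r. w i * y k i)"
proof -
  have "(\<Sum>i<r. w i * y k i) = (\<Sum>i<r. \<Sum>j<r. \<alpha> j * (y j i * y k i))"
    using w by (simp add: sum_distrib_right mult.assoc)
  also have "\<dots> = (\<Sum>j<r. \<alpha> j * (\<Sum>i<r. y j i * y k i))"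
    by (subst sum.swap) (simp add: sum_distrib_left)
  also have "\<dots> = (\<Sum>j<r. if j = k then \<alpha> j else 0)"
    using orth \<open>k < r\<close> by (intro sum.cong) auto
  also have "\<dots> = \<alpha> k"
    using \<open>k < r\<close> by simp
  finally show ?thesis by simp
qed

lemma rescaled_expansion_coeff:
  fixes d :: "nat \<Rightarrow> real" and y x :: "nat \<Rightarrow> nat \<Rightarrow> real"
  assumes dpos: "\<forall>i<r. 0 < d i"
    and orth: "\<forall>j<r. \<forall>k<r. (\<Sum>i<r. y j i * y k i) = (if j = k then 1 else 0)"
    and x: "\<forall>j<r. \<forall>i<r. x j i = y j i / sqrt (d i)"
    and z: "\<forall>i<r. z i = (\<Sum>j<r. \<alpha> j * x j i)"
    and "k < r"
  shows "\<alpha> k = (\<Sum>i<r. sqrt (d i) * z i * y k i)"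
proof (rule orthonormal_expansion_coeff[OF orth _ \<open>k < r\<close>])
  fix i assume "i < r"
  with dpos have "0 < d i" by simp
  with \<open>i < r\<close> show "sqrt (d i) * z i = (\<Sum>j<r. \<alpha> j * y j i)"
    using x z by (simp add: sum_distrib_left)
qed

lemma expansion_term_l2norm:
  assumes "\<forall>j<r. \<forall>i<r. x j i = y j i / sqrt (d i)" and "j < r"
  shows "l2norm r (\<lambda>i. \<alpha> j * x j i) = \<bar>\<alpha> j\<bar> * L2_set (\<lambda>i. y j i / sqrt (d i)) {..<r}"
  unfolding l2norm_eq_L2_set L2_set_mult_left[symmetric] using assms by (intro L2_set_cong) auto

lemma expansion_term_norm_le:
  fixes d :: "nat \<Rightarrow> real" and y x :: "nat \<Rightarrow> nat \<Rightarrow> real"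
  assumes "0 < m" and "0 < s" and d: "\<forall>i<r. m \<le> d i \<and> d i \<le> s\<^sup>2 * m"
    and orth: "\<forall>j<r. \<forall>k<r. (\<Sum>i<r. y j i * y k i) = (if j = k then 1 else 0)"
    and x: "\<forall>j<r. \<forall>i<r. x j i = y j i / sqrt (d i)"
    and z: "\<forall>i<r. z i = (\<Sum>j<r. \<alpha> j * x j i)"
    and "j < r"
  shows "l2norm r (\<lambda>i. \<alpha> j * x j i) \<le> s * l2norm r z"
proof -
  define w where "w i = sqrt (d i) * z i" for i
  have dpos: "\<forall>i<r. 0 < d i" using d \<open>0 < m\<close> by force
  have "L2_set w {..<r} / sqrt (s\<^sup>2 * m) \<le> L2_set (\<lambda>i. w i / sqrt (d i)) {..<r}"
    using d dpos by (intro L2_set_div_sqrt_ge) auto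
  also have "\<dots> = l2norm r z"
    unfolding l2norm_eq_L2_set w_def using dpos by (intro L2_set_cong) auto
  finally have w_le: "L2_set w {..<r} \<le> s * sqrt m * l2norm r z"
    using \<open>0 < m\<close> \<open>0 < s\<close> by (simp add: real_sqrt_mult field_simps)
  have y_unit: "L2_set (y j) {..<r} = 1"
    using orth \<open>j < r\<close> by (simp add: L2_set_def power2_eq_square)
  have "\<bar>\<alpha> j\<bar> \<le> (\<Sum>i<r. \<bar>w i\<bar> * \<bar>y j i\<bar>)"
    unfolding rescaled_expansion_coeff[OF dpos orth x z \<open>j < r\<close>, folded w_def]
    using sum_abs[of "\<lambda>i. w i * y j i" "{..<r}"] by (simp add: abs_mult)
  also have "\<dots> \<le> L2_set w {..<r}"
    using L2_set_mult_ineq[of w "y j" "{..<r}"] y_unit by simp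
  finally have alpha_le: "\<bar>\<alpha> j\<bar> \<le> L2_set w {..<r}" .
  have "l2norm r (\<lambda>i. \<alpha> j * x j i) = \<bar>\<alpha> j\<bar> * L2_set (\<lambda>i. y j i / sqrt (d i)) {..<r}"
    by (rule expansion_term_l2norm[OF x \<open>j < r\<close>])
  also have "\<dots> \<le> \<bar>\<alpha> j\<bar> * (1 / sqrt m)"
    using L2_set_div_sqrt_le[of m "{..<r}" d "y j"] \<open>0 < m\<close> d y_unit
    by (intro mult_left_mono) auto
  also have "\<dots> \<le> s * l2norm r z"
    using alpha_le w_le \<open>0 < m\<close> by (simp add: field_simps)
  finally show ?thesis .
qed

lemma first_expansion_term_norm_ge:
  fixes d :: "nat \<Rightarrow> real" and y x :: "nat \<Rightarrow> nat \<Rightarrow> real"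
  assumes "0 < m" and "0 < s" and d: "\<forall>i<r. m \<le> d i \<and> d i \<le> s\<^sup>2 * m"
    and orth: "\<forall>j<r. \<forall>k<r. (\<Sum>i<r. y j i * y k i) = (if j = k then 1 else 0)"
    and x: "\<forall>j<r. \<forall>i<r. x j i = y j i / sqrt (d i)"
    and z: "\<forall>i<r. z i = (\<Sum>j<r. \<alpha> j * x j i)"
    and "0 < r" and "0 \<le> c" and y0: "\<forall>i<r. c \<le> y 0 i" and znn: "\<forall>i<r. 0 \<le> z i"
  shows "c / s * l2norm r z \<le> l2norm r (\<lambda>i. \<alpha> 0 * x 0 i)"
proof -
  define w where "w i = sqrt (d i) * z i" for i
  have dpos: "\<forall>i<r. 0 < d i" using d \<open>0 < m\<close> by force
  have y_unit: "L2_set (y 0) {..<r} = 1"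
    using orth \<open>0 < r\<close> by (simp add: L2_set_def power2_eq_square)
  have "l2norm r z = L2_set (\<lambda>i. w i / sqrt (d i)) {..<r}"
    unfolding l2norm_eq_L2_set w_def using dpos by (intro L2_set_cong) auto
  also have "\<dots> \<le> L2_set w {..<r} / sqrt m"
    using d \<open>0 < m\<close> by (intro L2_set_div_sqrt_le) auto
  finally have z_le: "sqrt m * l2norm r z \<le> L2_set w {..<r}"
    using \<open>0 < m\<close> by (simp add: field_simps)
  have "c * L2_set w {..<r} \<le> c * (\<Sum>i<r. w i)"
    using znn dpos \<open>0 \<le> c\<close> by (intro mult_left_mono L2_set_le_sum) (auto simp: w_def)
  also have "\<dots> \<le> (\<Sum>i<r. y 0 i * w i)"
    unfolding sum_distrib_left using y0 znn dpos
    by (intro sum_mono mult_right_mono) (auto simp: w_def)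
  also have "\<dots> = \<alpha> 0"
    using rescaled_expansion_coeff[OF dpos orth x z \<open>0 < r\<close>] by (simp add: w_def mult_ac)
  finally have "c * sqrt m * l2norm r z \<le> \<bar>\<alpha> 0\<bar>"
    using mult_left_mono[OF z_le \<open>0 \<le> c\<close>] by (simp add: mult.assoc)
  then have "c / s * l2norm r z \<le> \<bar>\<alpha> 0\<bar> * (1 / sqrt (s\<^sup>2 * m))"
    using \<open>0 < m\<close> \<open>0 < s\<close> by (simp add: real_sqrt_mult field_simps)
  also have "\<dots> \<le> \<bar>\<alpha> 0\<bar> * L2_set (\<lambda>i. y 0 i / sqrt (d i)) {..<r}"
    using L2_set_div_sqrt_ge[of "{..<r}" d "s\<^sup>2 * m" "y 0"] d dpos y_unit
    by (intro mult_left_mono) auto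
  also have "\<dots> = l2norm r (\<lambda>i. \<alpha> 0 * x 0 i)"
    by (rule expansion_term_l2norm[OF x \<open>0 < r\<close>, symmetric])
  finally show ?thesis .
qed

lemma relpow_ratio_le:
  fixes f :: "'a \<Rightarrow> real"
  assumes "0 \<le> K" and step: "\<And>a b. (a, b) \<in> R \<Longrightarrow> f b \<le> K * f a"
  shows "(a, b) \<in> R ^^ k \<Longrightarrow> f b \<le> K ^ k * f a"
proof (induction k arbitrary: b)
  case (Suc k)
  then obtain c where "(a, c) \<in> R ^^ k" and "(c, b) \<in> R" by auto
  then have "f b \<le> K * (K ^ k * f a)"
    using Suc.IH step \<open>0 \<le> K\<close> by (meson mult_left_mono order_trans)
  then show ?case by (simp add: mult.assoc)
qed simp

lemma unit_vector_max_entry_ge: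
  fixes y :: "nat \<Rightarrow> real"
  assumes "0 < r" and "(\<Sum>i<r. (y i)\<^sup>2) = 1" and "\<forall>i<r. 0 \<le> y i"
  obtains i0 where "i0 < r" and "\<forall>i<r. y i \<le> y i0" and "1 / sqrt r \<le> y i0"
proof -
  have "Max (y ` {..<r}) \<in> y ` {..<r}"
    using \<open>0 < r\<close> by (intro Max_in) auto
  then obtain i0 where i0: "i0 < r" "y i0 = Max (y ` {..<r})" by auto
  then have max: "\<forall>i<r. y i \<le> y i0" by simp
  have "1 \<le> real r * (y i0)\<^sup>2"
    using sum_bounded_above[of "{..<r}" "\<lambda>i. (y i)\<^sup>2" "(y i0)\<^sup>2"] max assms
    by (simp add: power_mono)
  then have "sqrt (1 / real r) \<le> sqrt ((y i0)\<^sup>2)"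
    using \<open>0 < r\<close> by (intro real_sqrt_le_mono) (simp add: field_simps)
  moreover have "0 \<le> y i0"
    using assms(3) \<open>i0 < r\<close> by simp
  ultimately have "1 / sqrt r \<le> y i0"
    by (simp add: real_sqrt_divide)
  with i0 max show thesis by (intro that)
qed

lemma eigenvalue_le_max_row_sum:
  fixes L :: "nat \<Rightarrow> nat \<Rightarrow> real" and y :: "nat \<Rightarrow> real"
  assumes "\<forall>i<r. \<forall>k<r. 0 \<le> L i k" and "\<forall>i<r. (\<Sum>k<r. L i k) \<le> \<rho>"
    and "\<forall>i<r. 0 \<le> y i" and "i0 < r" and "0 < y i0" and "\<forall>i<r. y i \<le> y i0"
    and eig: "(\<Sum>k<r. L i0 k * y k) = \<theta> * y i0"
  shows "\<theta> \<le> \<rho>"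
proof -
  have "\<theta> * y i0 \<le> (\<Sum>k<r. L i0 k * y i0)"
    unfolding eig[symmetric] using assms(1,3-6) by (auto intro!: sum_mono mult_left_mono)
  also have "\<dots> \<le> \<rho> * y i0"
    using assms by (simp flip: sum_distrib_right)
  finally show ?thesis
    using \<open>0 < y i0\<close> by simp
qed

lemma connected_ratio_le:
  fixes L :: "nat \<Rightarrow> nat \<Rightarrow> real" and f :: "nat \<Rightarrow> real"
  assumes con: "matrix_graph_connected r L" and "1 \<le> K" and f_nonneg: "\<forall>i<r. 0 \<le> f i"
    and edge: "\<And>a b. a < r \<Longrightarrow> b < r \<Longrightarrow> 0 < L a b \<Longrightarrow> f b \<le> K * f a"
    and "i < r" and "j < r"
  shows "f j \<le> K ^ (r * r) * f i"
proof -
  define R where "R = {(a, b). a < r \<and> b < r \<and> 0 < L a b}"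
  have R_sub: "R \<subseteq> {..<r} \<times> {..<r}" unfolding R_def by auto
  then have "finite R" by (rule finite_subset) simp
  have "card R \<le> r * r"
    using card_mono[OF _ R_sub] by (simp add: card_cartesian_product)
  have "(i, j) \<in> R\<^sup>*"
    using con \<open>i < r\<close> \<open>j < r\<close> unfolding matrix_graph_connected_def R_def
    by (simp add: rtranclp_rtrancl_eq)
  then obtain k where "k \<le> card R" and "(i, j) \<in> R ^^ k"
    unfolding rtrancl_finite_eq_relpow[OF \<open>finite R\<close>] by blast
  then have "f j \<le> K ^ k * f i"
    using relpow_ratio_le[of K R f] edge \<open>1 \<le> K\<close> by (auto simp: R_def)
  also have "\<dots> \<le> K ^ (r * r) * f i"
    using \<open>k \<le> card R\<close> \<open>card R \<le> r * r\<close> \<open>1 \<le> K\<close> f_nonneg \<open>i < r\<close>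
    by (intro mult_right_mono power_increasing) auto
  finally show ?thesis .
qed

definition perron_bound :: "nat \<Rightarrow> real \<Rightarrow> real" where
  "perron_bound r \<epsilon> = 1 / (sqrt r * (r / \<epsilon>\<^sup>2 + 1) ^ (r * r))"

lemma perron_bound_pos: "0 < r \<Longrightarrow> 0 < perron_bound r \<epsilon>"
  by (simp add: perron_bound_def add_nonneg_pos)

lemma nonneg_eigenvector_entry_ge:
  fixes L :: "nat \<Rightarrow> nat \<Rightarrow> real" and y :: "nat \<Rightarrow> real"
  assumes "0 < \<epsilon>" and "0 < r"
    and sep: "eps_separated r \<epsilon> L" and con: "matrix_graph_connected r L"
    and unit: "(\<Sum>i<r. (y i)\<^sup>2) = 1" and ynn: "\<forall>i<r. 0 \<le> y i"
    and eig: "\<forall>i<r. (\<Sum>k<r. L i k * y k) = \<theta> * y i"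
    and "i < r"
  shows "perron_bound r \<epsilon> \<le> y i"
proof -
  obtain i0 where i0: "i0 < r" "\<forall>k<r. y k \<le> y i0" and y_i0: "1 / sqrt r \<le> y i0"
    using unit_vector_max_entry_ge[OF \<open>0 < r\<close> unit ynn] by blast
  have "0 < 1 / sqrt r" using \<open>0 < r\<close> by simp
  with y_i0 have "0 < y i0" by linarith
  have L_nonneg: "\<forall>a<r. \<forall>b<r. 0 \<le> L a b" and L_le: "\<forall>a<r. \<forall>b<r. L a b \<le> 1 / \<epsilon>"
    and L_ge: "\<forall>a<r. \<forall>b<r. 0 < L a b \<longrightarrow> \<epsilon> \<le> L a b"
    using sep \<open>0 < \<epsilon>\<close> unfolding eps_separated_def by (fastforce simp: less_le_not_le)+
  have "\<forall>a<r. (\<Sum>k<r. L a k) \<le> r / \<epsilon>"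
    using L_le sum_bounded_above[of "{..<r}" _ "1 / \<epsilon>"] by simp
  then have \<theta>_le: "\<theta> \<le> r / \<epsilon>"
    using eigenvalue_le_max_row_sum[OF L_nonneg _ ynn i0(1) \<open>0 < y i0\<close> i0(2)] eig i0(1) by blast
  define K where "K = r / \<epsilon>\<^sup>2 + 1"
  \<comment> \<open>Row \<open>a\<close> of the eigen-equation controls the edge \<open>(a, b)\<close>, so following a path from
    \<open>i\<close> to \<open>i0\<close> needs no symmetry of \<open>L\<close>.\<close>
  have edge: "y b \<le> K * y a" if ab: "a < r" "b < r" "0 < L a b" for a b
  proof -
    have "\<epsilon> * y b \<le> L a b * y b" using L_ge ynn ab by (simp add: mult_right_mono)
    also have "\<dots> \<le> (\<Sum>k<r. L a k * y k)"
      using L_nonneg ynn ab by (intro member_le_sum[where f = "\<lambda>k. L a k * y k"]) auto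
    also have "\<dots> = \<theta> * y a" using eig ab by simp
    also have "\<dots> \<le> r / \<epsilon> * y a" using \<theta>_le ynn ab by (intro mult_right_mono) auto
    finally have "y b \<le> r / \<epsilon>\<^sup>2 * y a"
      using \<open>0 < \<epsilon>\<close> by (simp add: field_simps power2_eq_square)
    also have "\<dots> \<le> K * y a" unfolding K_def using ynn ab by (intro mult_right_mono) auto
    finally show ?thesis .
  qed
  have "1 \<le> K" unfolding K_def by simp
  have "perron_bound r \<epsilon> \<le> y i0 / K ^ (r * r)"
    using y_i0 \<open>1 \<le> K\<close> unfolding perron_bound_def K_def[symmetric]
    by (simp add: divide_right_mono flip: divide_divide_eq_left)
  also have "\<dots> \<le> y i"
    using connected_ratio_le[OF con \<open>1 \<le> K\<close> ynn edge \<open>i < r\<close> i0(1)] \<open>1 \<le> K\<close>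
    by (simp add: field_simps)
  finally show ?thesis .
qed

lemma comparable_weights_range:
  fixes n :: "nat \<Rightarrow> nat"
  assumes "\<forall>i<r. \<forall>j<r. n i \<le> A * n j" and "k < r" and "i < r"
  shows "real (n k) / (real A + 1) \<le> real (n i)"
    and "real (n i) \<le> (real A + 1)\<^sup>2 * (real (n k) / (real A + 1))"
proof -
  have "real (n k) \<le> real A * real (n i)" and "real (n i) \<le> real A * real (n k)"
    using assms by (metis of_nat_le_iff of_nat_mult)+
  moreover have "(real A + 1)\<^sup>2 * (real (n k) / (real A + 1)) = (real A + 1) * real (n k)"
    by (simp add: power2_eq_square)
  ultimately show "real (n k) / (real A + 1) \<le> real (n i)"
    and "real (n i) \<le> (real A + 1)\<^sup>2 * (real (n k) / (real A + 1))"
    by (simp_all add: divide_le_eq algebra_simps)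
qed

lemma expansion_term_norm_bounds:
  fixes n :: "nat \<Rightarrow> nat" and L y x :: "nat \<Rightarrow> nat \<Rightarrow> real" and \<theta> z \<alpha> :: "nat \<Rightarrow> real"
  assumes "0 < \<epsilon>" and "0 < r"
    and n_pos: "\<forall>i<r. 0 < n i" and n_comp: "\<forall>i<r. \<forall>j<r. n i \<le> A * n j"
    and sep: "eps_separated r \<epsilon> L" and con: "matrix_graph_connected r L"
    and orth: "\<forall>j<r. \<forall>k<r. (\<Sum>i<r. y j i * y k i) = (if j = k then 1 else 0)"
    and eig: "\<forall>j<r. \<forall>i<r. (\<Sum>k<r. L i k * y j k) = \<theta> j * y j i"
    and y0_nonneg: "\<forall>i<r. 0 \<le> y 0 i"
    and x: "\<forall>j<r. \<forall>i<r. x j i = y j i / sqrt (real (n i))"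
    and z_nonneg: "\<forall>i<r. 0 \<le> z i" and z: "\<forall>i<r. z i = (\<Sum>j<r. \<alpha> j * x j i)"
  shows "perron_bound r \<epsilon> / (real A + 1) * l2norm r z \<le> l2norm r (\<lambda>i. \<alpha> 0 * x 0 i)"
    and "\<forall>j<r. l2norm r (\<lambda>i. \<alpha> j * x j i) \<le> (real A + 1) * l2norm r z"
proof -
  define m where "m = real (n 0) / (real A + 1)"
  have "0 < m" using n_pos \<open>0 < r\<close> by (simp add: m_def)
  have weights: "\<forall>i<r. m \<le> real (n i) \<and> real (n i) \<le> (real A + 1)\<^sup>2 * m"
    using comparable_weights_range[OF n_comp \<open>0 < r\<close>] by (simp add: m_def)
  have "(\<Sum>i<r. (y 0 i)\<^sup>2) = 1" using orth \<open>0 < r\<close> by (simp add: power2_eq_square)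
  then have y0_ge: "\<forall>i<r. perron_bound r \<epsilon> \<le> y 0 i"
    using nonneg_eigenvector_entry_ge[OF \<open>0 < \<epsilon>\<close> \<open>0 < r\<close> sep con _ y0_nonneg] eig \<open>0 < r\<close>
    by blast
  have "0 \<le> perron_bound r \<epsilon>"
    using perron_bound_pos[OF \<open>0 < r\<close>] by (rule less_imp_le)
  then show "perron_bound r \<epsilon> / (real A + 1) * l2norm r z \<le> l2norm r (\<lambda>i. \<alpha> 0 * x 0 i)"
    using first_expansion_term_norm_ge[OF \<open>0 < m\<close> _ weights orth x z \<open>0 < r\<close> _ y0_ge z_nonneg]
    by simp
  show "\<forall>j<r. l2norm r (\<lambda>i. \<alpha> j * x j i) \<le> (real A + 1) * l2norm r z"
    using expansion_term_norm_le[OF \<open>0 < m\<close> _ weights orth x z] by simp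
qed

theorem lemma2p2:
  fixes A r :: nat and \<epsilon> :: real
  assumes "\<epsilon> > 0"
  shows "\<exists>\<delta>>0. \<exists>S>0. \<forall>(n :: nat \<Rightarrow> nat) (L :: nat \<Rightarrow> nat \<Rightarrow> real)
           (y :: nat \<Rightarrow> nat \<Rightarrow> real) (\<theta> :: nat \<Rightarrow> real) (x :: nat \<Rightarrow> nat \<Rightarrow> real)
           (z :: nat \<Rightarrow> real) (\<alpha> :: nat \<Rightarrow> real).
     (\<forall>i<r. n i > 0) \<and>
     (\<forall>i<r. \<forall>j<r. n i \<le> A * n j) \<and>
     (\<forall>i<r. \<forall>j<r. L i j = L j i) \<and>
     (\<forall>i<r. \<forall>j<r. L i j \<ge> 0) \<and>
     eps_separated r \<epsilon> L \<and>
     matrix_graph_connected r L \<and>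
     (\<forall>j<r. \<forall>k<r. (\<Sum>i<r. y j i * y k i) = (if j = k then 1 else 0)) \<and>
     (\<forall>j<r. \<forall>i<r. (\<Sum>k<r. L i k * y j k) = \<theta> j * y j i) \<and>
     (\<forall>j<r. \<forall>k<r. j \<le> k \<longrightarrow> \<theta> k \<le> \<theta> j) \<and>
     (\<forall>i<r. y 0 i \<ge> 0) \<and>
     (\<forall>j<r. \<forall>i<r. x j i = y j i / sqrt (real (n i))) \<and>
     (\<forall>i<r. z i \<ge> 0) \<and>
     (\<forall>i<r. z i = (\<Sum>j<r. \<alpha> j * x j i))
     \<longrightarrow>
     l2norm r (\<lambda>i. \<alpha> 0 * x 0 i) \<ge> \<delta> * l2norm r z \<and>
     (\<forall>j<r. l2norm r (\<lambda>i. \<alpha> j * x j i) \<le> S * l2norm r z)"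
proof (cases "r = 0")
  case True
  then show ?thesis by (simp add: l2norm_def gt_ex)
next
  case False
  then have "0 < r" by simp
  show ?thesis
  proof (rule exI[of _ "perron_bound r \<epsilon> / (real A + 1)"], intro conjI exI[of _ "real A + 1"])
    show "0 < perron_bound r \<epsilon> / (real A + 1)"
      using perron_bound_pos[OF \<open>0 < r\<close>] by simp
  qed (simp, (intro allI impI, elim conjE),
      (intro conjI expansion_term_norm_bounds[OF assms \<open>0 < r\<close>]; assumption))
qed

end
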